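(* Let $R$ be an incline with $|R|\geq 2$. Then $R$ is $k$-simple if and only if $R$ is isomorphic to $R_0$ or to $R_1$, where $R_0$ and $R_1$ are the semirings on $\{0,1\}$ with addition $0+0=0$, $0+1=1+0=1+1=1$, and multiplication: in $R_0$, $xy=0$ for all $x,y$; in $R_1$, $1\cdot 1=1$ and $xy=0$ otherwise.
   Context: A semiring $(R,+,\cdot)$ is a set with two binary operations such that $(R,+)$ is a commutative semigroup, $(R,\cdot)$ is a semigroup, and multiplication distributes over addition from both sides; no zero or identity is assumed. An incline is a semiring with $r+r=r$ for all $r$ and $x+xy=x=x+yx$ for all $x,y\in R$. A zero of $R$ is an element $0$ with $0+r=r$ and $0r=r0=0$ for all $r\in R$. An ideal of $R$ is a nonempty subset $A\subseteq R$ with $a+b\in A$ and $ra,ar\in A$ for all $a,b\in A$, $r\in R$; the trivial ideals are $R$ and, if $R$ has a zero $0$, $\{0\}$. For an ideal $A$, its $k$-closure is $\overline{A}=\{x\in R\mid x+a=b \text{ for some } a,b\in A\}$, and $A$ is a $k$-ideal if $A=\overline{A}$. $R$ is $k$-simple if it has no $k$-ideals other than the trivial ideals. *)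

theory Defs
  imports Main
begin

definition semiring_on :: "'a set \<Rightarrow> ('a \<Rightarrow> 'a \<Rightarrow> 'a) \<Rightarrow> ('a \<Rightarrow> 'a \<Rightarrow> 'a) \<Rightarrow> bool" where
  "semiring_on R add mul \<longleftrightarrow>
     (\<forall>x\<in>R. \<forall>y\<in>R. add x y \<in> R \<and> mul x y \<in> R) \<and>
     (\<forall>x\<in>R. \<forall>y\<in>R. \<forall>z\<in>R. add (add x y) z = add x (add y z)) \<and>
     (\<forall>x\<in>R. \<forall>y\<in>R. add x y = add y x) \<and>
     (\<forall>x\<in>R. \<forall>y\<in>R. \<forall>z\<in>R. mul (mul x y) z = mul x (mul y z)) \<and>
     (\<forall>x\<in>R. \<forall>y\<in>R. \<forall>z\<in>R. mul x (add y z) = add (mul x y) (mul x z)) \<and>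
     (\<forall>x\<in>R. \<forall>y\<in>R. \<forall>z\<in>R. mul (add y z) x = add (mul y x) (mul z x))"

definition incline_on :: "'a set \<Rightarrow> ('a \<Rightarrow> 'a \<Rightarrow> 'a) \<Rightarrow> ('a \<Rightarrow> 'a \<Rightarrow> 'a) \<Rightarrow> bool" where
  "incline_on R add mul \<longleftrightarrow> semiring_on R add mul \<and>
     (\<forall>r\<in>R. add r r = r) \<and>
     (\<forall>x\<in>R. \<forall>y\<in>R. add x (mul x y) = x \<and> add x (mul y x) = x)"

definition is_zero :: "'a set \<Rightarrow> ('a \<Rightarrow> 'a \<Rightarrow> 'a) \<Rightarrow> ('a \<Rightarrow> 'a \<Rightarrow> 'a) \<Rightarrow> 'a \<Rightarrow> bool" where
  "is_zero R add mul z \<longleftrightarrow> z \<in> R \<and>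
     (\<forall>r\<in>R. add z r = r \<and> mul z r = z \<and> mul r z = z)"

definition ideal_on :: "'a set \<Rightarrow> ('a \<Rightarrow> 'a \<Rightarrow> 'a) \<Rightarrow> ('a \<Rightarrow> 'a \<Rightarrow> 'a) \<Rightarrow> 'a set \<Rightarrow> bool" where
  "ideal_on R add mul A \<longleftrightarrow> A \<subseteq> R \<and> A \<noteq> {} \<and>
     (\<forall>a\<in>A. \<forall>b\<in>A. add a b \<in> A) \<and>
     (\<forall>a\<in>A. \<forall>r\<in>R. mul r a \<in> A \<and> mul a r \<in> A)"

definition k_closure :: "'a set \<Rightarrow> ('a \<Rightarrow> 'a \<Rightarrow> 'a) \<Rightarrow> 'a set \<Rightarrow> 'a set" where
  "k_closure R add A = {x \<in> R. \<exists>a\<in>A. \<exists>b\<in>A. add x a = b}"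

definition k_ideal :: "'a set \<Rightarrow> ('a \<Rightarrow> 'a \<Rightarrow> 'a) \<Rightarrow> ('a \<Rightarrow> 'a \<Rightarrow> 'a) \<Rightarrow> 'a set \<Rightarrow> bool" where
  "k_ideal R add mul A \<longleftrightarrow> ideal_on R add mul A \<and> A = k_closure R add A"

definition trivial_ideal :: "'a set \<Rightarrow> ('a \<Rightarrow> 'a \<Rightarrow> 'a) \<Rightarrow> ('a \<Rightarrow> 'a \<Rightarrow> 'a) \<Rightarrow> 'a set \<Rightarrow> bool" where
  "trivial_ideal R add mul A \<longleftrightarrow> A = R \<or> (\<exists>z. is_zero R add mul z \<and> A = {z})"

definition k_simple :: "'a set \<Rightarrow> ('a \<Rightarrow> 'a \<Rightarrow> 'a) \<Rightarrow> ('a \<Rightarrow> 'a \<Rightarrow> 'a) \<Rightarrow> bool" where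
  "k_simple R add mul \<longleftrightarrow> (\<forall>A. k_ideal R add mul A \<longrightarrow> trivial_ideal R add mul A)"

definition semiring_iso ::
  "'a set \<Rightarrow> ('a \<Rightarrow> 'a \<Rightarrow> 'a) \<Rightarrow> ('a \<Rightarrow> 'a \<Rightarrow> 'a) \<Rightarrow>
   'b set \<Rightarrow> ('b \<Rightarrow> 'b \<Rightarrow> 'b) \<Rightarrow> ('b \<Rightarrow> 'b \<Rightarrow> 'b) \<Rightarrow> ('a \<Rightarrow> 'b) \<Rightarrow> bool" where
  "semiring_iso R add mul S add' mul' f \<longleftrightarrow> bij_betw f R S \<and>
     (\<forall>x\<in>R. \<forall>y\<in>R. f (add x y) = add' (f x) (f y) \<and> f (mul x y) = mul' (f x) (f y))"

definition isomorphic ::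
  "'a set \<Rightarrow> ('a \<Rightarrow> 'a \<Rightarrow> 'a) \<Rightarrow> ('a \<Rightarrow> 'a \<Rightarrow> 'a) \<Rightarrow>
   'b set \<Rightarrow> ('b \<Rightarrow> 'b \<Rightarrow> 'b) \<Rightarrow> ('b \<Rightarrow> 'b \<Rightarrow> 'b) \<Rightarrow> bool" where
  "isomorphic R add mul S add' mul' \<longleftrightarrow> (\<exists>f. semiring_iso R add mul S add' mul' f)"

(* The two-element semirings on {0,1}, with 0 = False, 1 = True *)
definition R01 :: "bool set" where "R01 = {False, True}"
definition add01 :: "bool \<Rightarrow> bool \<Rightarrow> bool" where "add01 x y = (x \<or> y)"
definition mul_R0 :: "bool \<Rightarrow> bool \<Rightarrow> bool" where "mul_R0 x y = False"
definition mul_R1 :: "bool \<Rightarrow> bool \<Rightarrow> bool" where "mul_R1 x y = (x \<and> y)"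

end

theory Submission
  imports Defs
begin

text \<open>In an incline, \<open>x \<le> a \<longleftrightarrow> x + a = a\<close> is a partial order, and absorption
  \<open>x + x y = x = x + y x\<close> says that products lie below their factors. Hence every
  principal down-set \<open>{x. x \<le> a}\<close> is a k-ideal. If \<open>R\<close> is k-simple, each such down-set
  is \<open>R\<close> or the zero ideal; with two distinct elements this forces a zero \<open>0\<close>, and every
  \<open>c \<noteq> 0\<close> to be the top element. So \<open>R = {0, t}\<close>, and \<open>t t \<in> {0, t}\<close> decides between
  \<open>R\<^sub>0\<close> and \<open>R\<^sub>1\<close>. Conversely, every ideal of a semiring with zero contains the zero,
  so a two-element semiring with zero has only trivial ideals.\<close>

locale incline =
  fixes R :: "'a set" and add (infixl "\<oplus>" 65) and mul (infixl "\<otimes>" 70)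
  assumes incline: "incline_on R (\<oplus>) (\<otimes>)"
begin

lemma add_closed: "x \<in> R \<Longrightarrow> y \<in> R \<Longrightarrow> x \<oplus> y \<in> R"
  and mul_closed: "x \<in> R \<Longrightarrow> y \<in> R \<Longrightarrow> x \<otimes> y \<in> R"
  and add_assoc: "x \<in> R \<Longrightarrow> y \<in> R \<Longrightarrow> z \<in> R \<Longrightarrow> x \<oplus> y \<oplus> z = x \<oplus> (y \<oplus> z)"
  and add_commute: "x \<in> R \<Longrightarrow> y \<in> R \<Longrightarrow> x \<oplus> y = y \<oplus> x"
  and add_idem: "x \<in> R \<Longrightarrow> x \<oplus> x = x"
  and absorb_right: "x \<in> R \<Longrightarrow> y \<in> R \<Longrightarrow> x \<oplus> x \<otimes> y = x"
  and absorb_left: "x \<in> R \<Longrightarrow> y \<in> R \<Longrightarrow> x \<oplus> y \<otimes> x = x"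
  using incline unfolding incline_on_def semiring_on_def by blast+

lemma below_trans:
  assumes "x \<in> R" "y \<in> R" "a \<in> R" "x \<oplus> y = y" "y \<oplus> a = a"
  shows "x \<oplus> a = a"
  by (metis add_assoc assms)

lemma below_antisym:
  assumes "x \<in> R" "y \<in> R" "x \<oplus> y = y" "y \<oplus> x = x"
  shows "x = y"
  by (metis add_commute assms)

lemma zero_unique:
  assumes "is_zero R (\<oplus>) (\<otimes>) z" "is_zero R (\<oplus>) (\<otimes>) z'"
  shows "z = z'"
  using assms add_commute unfolding is_zero_def by metis

lemma down_set_k_ideal:
  assumes a: "a \<in> R"
  shows "k_ideal R (\<oplus>) (\<otimes>) {x \<in> R. x \<oplus> a = a}"
    (is "k_ideal R (\<oplus>) (\<otimes>) ?D")
proof -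
  have add_below: "x \<oplus> y \<in> ?D" if "x \<in> ?D" "y \<in> ?D" for x y
    using that add_closed add_assoc a by auto
  have mul_below: "r \<otimes> x \<in> ?D \<and> x \<otimes> r \<in> ?D" if x: "x \<in> ?D" and r: "r \<in> R" for x r
  proof -
    from x have xR: "x \<in> R" and "x \<oplus> a = a"
      by auto
    moreover have "r \<otimes> x \<oplus> x = x" "x \<otimes> r \<oplus> x = x"
      using absorb_left[OF xR r] absorb_right[OF xR r] add_commute mul_closed xR r by auto
    ultimately show ?thesis
      using below_trans[of "r \<otimes> x" x a] below_trans[of "x \<otimes> r" x a] mul_closed r a by auto
  qed
  have closure_sub: "x \<in> ?D" if x_closure: "x \<in> k_closure R (\<oplus>) ?D" for x
  proof -
    obtain c b where x: "x \<in> R" and c: "c \<in> R" and b: "b \<in> R" "b \<oplus> a = a"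
        and "x \<oplus> c = b"
      using x_closure unfolding k_closure_def by blast
    then have "x \<oplus> b = b"
      by (metis add_assoc add_idem)
    then show ?thesis
      using below_trans[of x b a] x b a by auto
  qed
  have "?D \<subseteq> k_closure R (\<oplus>) ?D"
    using a add_idem unfolding k_closure_def by blast
  moreover have "a \<in> ?D"
    using a add_idem by blast
  ultimately show ?thesis
    unfolding k_ideal_def ideal_on_def
    using closure_sub add_below mul_below by blast
qed

lemma k_simple_two_elements:
  assumes simple: "k_simple R (\<oplus>) (\<otimes>)" and a: "a \<in> R" and b: "b \<in> R" "a \<noteq> b"
  obtains z t where "is_zero R (\<oplus>) (\<otimes>) z" "t \<noteq> z" "R = {z, t}"
proof -
  have down_trivial: "{x \<in> R. x \<oplus> c = c} = R \<or>
      (\<exists>z. is_zero R (\<oplus>) (\<otimes>) z \<and> {x \<in> R. x \<oplus> c = c} = {z})" if "c \<in> R" for c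
    using simple down_set_k_ideal[OF that] unfolding k_simple_def trivial_ideal_def by blast
  have "\<exists>z. is_zero R (\<oplus>) (\<otimes>) z"
  proof (rule ccontr)
    assume "\<nexists>z. is_zero R (\<oplus>) (\<otimes>) z"
    then have "a \<oplus> b = b" "b \<oplus> a = a"
      using down_trivial[OF a] down_trivial[OF b(1)] a b(1) by blast+
    then show False
      using below_antisym a b by blast
  qed
  then obtain z where z: "is_zero R (\<oplus>) (\<otimes>) z"
    by blast
  have top: "x \<oplus> c = c" if "x \<in> R" "c \<in> R" "c \<noteq> z" for x c
  proof -
    have "c \<in> {x \<in> R. x \<oplus> c = c}"
      using that add_idem by auto
    then show ?thesis
      using down_trivial[of c] zero_unique[OF z] that by blast
  qed
  obtain t where t: "t \<in> R" "t \<noteq> z"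
    using a b by blast
  have "R = {z, t}"
  proof
    show "R \<subseteq> {z, t}"
      using top t below_antisym by blast
    show "{z, t} \<subseteq> R"
      using z t unfolding is_zero_def by blast
  qed
  with z t show thesis
    using that by blast
qed

end

lemma two_element_isomorphic:
  assumes z: "is_zero R add mul z" and R: "R = {z, t}" and "t \<noteq> z"
    and "add t t = t" and "add t z = add z t"
  shows "isomorphic R add mul R01 add01 (\<lambda>x y. x \<and> y \<and> mul t t = t)"
  unfolding isomorphic_def semiring_iso_def
proof (intro exI conjI)
  show "bij_betw (\<lambda>x. x = t) R R01"
    unfolding bij_betw_def inj_on_def R01_def R using \<open>t \<noteq> z\<close> by auto
  have "z \<in> R" "t \<in> R"
    using R by auto
  then show "\<forall>x\<in>R. \<forall>y\<in>R. (add x y = t) = add01 (x = t) (y = t) \<and>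
      (mul x y = t) = (x = t \<and> y = t \<and> mul t t = t)"
    using z assms(3-5) unfolding R is_zero_def by (auto simp: add01_def)
qed

lemma two_element_isomorphic_R0_or_R1:
  assumes z: "is_zero R add mul z" and R: "R = {z, t}" and "t \<noteq> z"
    and "add t t = t" and "add t z = add z t" and "mul t t \<in> R"
  shows "isomorphic R add mul R01 add01 mul_R0 \<or> isomorphic R add mul R01 add01 mul_R1"
proof -
  have iso: "isomorphic R add mul R01 add01 (\<lambda>x y. x \<and> y \<and> mul t t = t)"
    using two_element_isomorphic assms(1-5) .
  consider "mul t t = z" | "mul t t = t"
    using \<open>mul t t \<in> R\<close> R by blast
  then show ?thesis
  proof cases
    case 1
    then have "(\<lambda>x y. x \<and> y \<and> mul t t = t) = mul_R0"
      using \<open>t \<noteq> z\<close> by (auto simp: fun_eq_iff mul_R0_def)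
    then show ?thesis
      using iso by simp
  next
    case 2
    then have "(\<lambda>x y. x \<and> y \<and> mul t t = t) = mul_R1"
      by (auto simp: fun_eq_iff mul_R1_def)
    then show ?thesis
      using iso by simp
  qed
qed

lemma isomorphic_R01_two_elements:
  assumes "isomorphic R add mul R01 add01 mul'"
    and closed: "\<forall>x\<in>R. \<forall>y\<in>R. add x y \<in> R \<and> mul x y \<in> R"
    and mul'_False: "\<And>x. mul' False x = False \<and> mul' x False = False"
  obtains z t where "is_zero R add mul z" "R = {z, t}"
proof -
  obtain f where "bij_betw f R R01"
    and hom: "\<forall>x\<in>R. \<forall>y\<in>R. f (add x y) = add01 (f x) (f y) \<and> f (mul x y) = mul' (f x) (f y)"
    using assms(1) unfolding isomorphic_def semiring_iso_def by blast
  then have inj: "inj_on f R" and img: "f ` R = {False, True}"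
    unfolding bij_betw_def R01_def by auto
  obtain z t where z: "z \<in> R" "f z = False" and t: "t \<in> R" "f t = True"
    using img by (metis imageE insertCI)
  have "is_zero R add mul z"
    unfolding is_zero_def
    using z inj hom closed mul'_False by (auto simp: add01_def inj_on_def)
  moreover have "R = {z, t}"
  proof
    show "R \<subseteq> {z, t}"
      using inj z t by (auto simp: inj_on_def)
  qed (use z t in auto)
  ultimately show thesis
    using that by blast
qed

lemma two_element_k_simple:
  assumes z: "is_zero R add mul z" and R: "R = {z, t}"
  shows "k_simple R add mul"
  unfolding k_simple_def
proof (intro allI impI)
  fix A
  assume "k_ideal R add mul A"
  then have A: "A \<subseteq> R" "A \<noteq> {}" "\<forall>a\<in>A. \<forall>r\<in>R. mul a r \<in> A"
    unfolding k_ideal_def ideal_on_def by auto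
  then obtain a where "a \<in> A"
    by blast
  then have "mul a z = z" "mul a z \<in> A"
    using z A unfolding is_zero_def by auto
  then have "z \<in> A"
    by simp
  then have "A = R \<or> A = {z}"
    using A R by auto
  then show "trivial_ideal R add mul A"
    using z unfolding trivial_ideal_def by blast
qed

theorem theorem5p4:
  fixes R :: "'a set" and add mul :: "'a \<Rightarrow> 'a \<Rightarrow> 'a"
  assumes "incline_on R add mul"
    and "\<exists>a\<in>R. \<exists>b\<in>R. a \<noteq> b"
  shows "k_simple R add mul \<longleftrightarrow>
    (isomorphic R add mul R01 add01 mul_R0 \<or> isomorphic R add mul R01 add01 mul_R1)"
proof
  interpret incline R add mul
    using assms(1) by unfold_locales
  assume "k_simple R add mul"
  then obtain z t where z: "is_zero R add mul z" and "t \<noteq> z" and R: "R = {z, t}"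
    using assms(2) k_simple_two_elements by blast
  then have "t \<in> R" "z \<in> R"
    by auto
  then show "isomorphic R add mul R01 add01 mul_R0 \<or> isomorphic R add mul R01 add01 mul_R1"
    using two_element_isomorphic_R0_or_R1[OF z R \<open>t \<noteq> z\<close>] add_idem add_commute mul_closed
    by blast
next
  have closed: "\<forall>x\<in>R. \<forall>y\<in>R. add x y \<in> R \<and> mul x y \<in> R"
    using assms(1) unfolding incline_on_def semiring_on_def by blast
  assume "isomorphic R add mul R01 add01 mul_R0 \<or> isomorphic R add mul R01 add01 mul_R1"
  then obtain z t where "is_zero R add mul z" "R = {z, t}"
    using isomorphic_R01_two_elements[OF _ closed] unfolding mul_R0_def mul_R1_def by blast
  then show "k_simple R add mul"
    by (rule two_element_k_simple)
qed

end
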